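(* For each of the following finite posets $\mathcal{P}$ one has $b(\mathfrak{g}^{\prec}(\mathcal{P}))=|Rel_{\overline{C}}(\mathcal{P})|$: (a) $\mathcal{P}=\mathbf{2\times n}$ for $n\ge 1$; (b) $\mathcal{P}=T_m(n)$ for $m\ge 2$, $n\ge 1$.
   Context: All Lie algebras are over an algebraically closed field $\mathbf{k}$ of characteristic zero. For a finite poset $\mathcal{P}$, write $x\prec y$ for strict relations; a strict relation $p\prec q$ is covering if there is no $z$ with $p\prec z\prec q$, and $Rel_{\overline{C}}(\mathcal{P})$ is the set of non-covering strict relations. $\mathfrak{g}^{\prec}(\mathcal{P})$ is the Lie algebra (commutator bracket) of matrices spanned by matrix units $E_{p,q}$ with $p\prec q$. The breadth is $b(L)=\max_{x\in L}\operatorname{rank}(\mathrm{ad}_x)$. $\mathbf{2\times n}$ is the poset on $\{i_j : 1\le i\le n,\ 1\le j\le 2\}$ with $i_j\preceq i'_{j'}$ iff $i\le i'$ and $j\le j'$. $T_m(n)$ is the rooted complete $m$-ary tree of depth $n$: the poset on $\{i_k : 1\le k\le n,\ 1\le i\le m^{k-1}\}$ whose covering relations are $i_k\prec j_{k+1}$ for $1\le k<n$, $1\le i\le m^{k-1}$, $m(i-1)+1\le j\le mi$, with the order the transitive closure of these. *)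

theory Defs
  imports "HOL-Computational_Algebra.Computational_Algebra" "HOL-Library.Function_Algebras"
begin

definition rel_noncov :: "'a set \<Rightarrow> ('a \<Rightarrow> 'a \<Rightarrow> bool) \<Rightarrow> ('a \<times> 'a) set" where
  "rel_noncov P lt = {(p, q). p \<in> P \<and> q \<in> P \<and> lt p q \<and> (\<exists>z\<in>P. lt p z \<and> lt z q)}"

text \<open>Matrices indexed by P x P with entries in k; g^prec(P) is the span of the
  matrix units E_{p,q} with p strictly below q, i.e. the matrices supported on
  strict relations.\<close>
definition gprec :: "'a set \<Rightarrow> ('a \<Rightarrow> 'a \<Rightarrow> bool) \<Rightarrow> ('a \<times> 'a \<Rightarrow> 'k::field) set" where
  "gprec P lt = {x. \<forall>a b. x (a, b) \<noteq> 0 \<longrightarrow> a \<in> P \<and> b \<in> P \<and> lt a b}"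

definition matmul :: "'a set \<Rightarrow> ('a \<times> 'a \<Rightarrow> 'k::field) \<Rightarrow> ('a \<times> 'a \<Rightarrow> 'k) \<Rightarrow> ('a \<times> 'a \<Rightarrow> 'k)" where
  "matmul P x y = (\<lambda>(a, c). \<Sum>b\<in>P. x (a, b) * y (b, c))"

definition lie_bracket :: "'a set \<Rightarrow> ('a \<times> 'a \<Rightarrow> 'k::field) \<Rightarrow> ('a \<times> 'a \<Rightarrow> 'k) \<Rightarrow> ('a \<times> 'a \<Rightarrow> 'k)" where
  "lie_bracket P x y = (\<lambda>ij. matmul P x y ij - matmul P y x ij)"

definition mscale :: "'k::field \<Rightarrow> ('a \<times> 'a \<Rightarrow> 'k) \<Rightarrow> ('a \<times> 'a \<Rightarrow> 'k)" where
  "mscale c f = (\<lambda>ij. c * f ij)"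

definition ad_rank :: "'a set \<Rightarrow> ('a \<Rightarrow> 'a \<Rightarrow> bool) \<Rightarrow> ('a \<times> 'a \<Rightarrow> 'k::field) \<Rightarrow> nat" where
  "ad_rank P lt x = vector_space.dim mscale (lie_bracket P x ` gprec P lt)"

definition breadth :: "'a set \<Rightarrow> ('a \<Rightarrow> 'a \<Rightarrow> bool) \<Rightarrow> 'k::field itself \<Rightarrow> nat" where
  "breadth P lt (_::'k itself) = Max (ad_rank P lt ` (gprec P lt :: ('a \<times> 'a \<Rightarrow> 'k) set))"

text \<open>Element i_j of 2 x n is the pair (i, j).\<close>
definition two_by_n :: "nat \<Rightarrow> (nat \<times> nat) set" where
  "two_by_n n = {(i, j). 1 \<le> i \<and> i \<le> n \<and> 1 \<le> j \<and> j \<le> 2}"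

definition two_by_n_lt :: "nat \<times> nat \<Rightarrow> nat \<times> nat \<Rightarrow> bool" where
  "two_by_n_lt x y = (fst x \<le> fst y \<and> snd x \<le> snd y \<and> x \<noteq> y)"

text \<open>Element i_k of T_m(n) is the pair (i, k).\<close>
definition tree_poset :: "nat \<Rightarrow> nat \<Rightarrow> (nat \<times> nat) set" where
  "tree_poset m n = {(i, k). 1 \<le> k \<and> k \<le> n \<and> 1 \<le> i \<and> i \<le> m ^ (k - 1)}"

definition tree_cover :: "nat \<Rightarrow> nat \<Rightarrow> ((nat \<times> nat) \<times> (nat \<times> nat)) set" where
  "tree_cover m n = {((i, k), (j, l)). 1 \<le> k \<and> k < n \<and> 1 \<le> i \<and> i \<le> m ^ (k - 1)
       \<and> l = k + 1 \<and> m * (i - 1) + 1 \<le> j \<and> j \<le> m * i}"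

definition tree_lt :: "nat \<Rightarrow> nat \<Rightarrow> nat \<times> nat \<Rightarrow> nat \<times> nat \<Rightarrow> bool" where
  "tree_lt m n x y = ((x, y) \<in> (tree_cover m n)\<^sup>+)"

end

theory Submission
  imports Defs
begin

text \<open>A commutator [x, y] of matrices supported on strict relations has (a, c)-entry a sum of
  products x(a, b) y(b, c) with a \<prec> b \<prec> c, so it vanishes on covering relations; hence every
  ad x maps into the span of the matrix units E(p, q) with p \<prec> q non-covering, and the breadth is
  at most the number of such relations.

  For equality it suffices to find one x whose ad x hits every such E(p, q). Take x to be the
  indicator of a set X of relations in which every element has at most one lower X-neighbour and
  every non-covering p \<prec> q factors as (p, b) \<in> X, b \<prec> q. Then
  [x, E(b, q)] = E(p, q) - \<Sum>(q, d) \<in> X. E(b, d), where every (b, d) is again non-covering and d lies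
  strictly above q, so a downward induction on q puts every E(p, q) into the image of ad x.
  For 2 x n one takes for X the steps along both chains together with the rung between the two
  minimal elements; for T_m(n) the covering relations themselves.\<close>

interpretation mat: vector_space "mscale :: 'k::field \<Rightarrow> ('a \<times> 'a \<Rightarrow> 'k) \<Rightarrow> ('a \<times> 'a \<Rightarrow> 'k)"
  by unfold_locales (simp_all add: mscale_def fun_eq_iff algebra_simps)

definition indicator_matrix :: "('a \<times> 'a) set \<Rightarrow> ('a \<times> 'a \<Rightarrow> 'k::field)" where
  "indicator_matrix X = (\<lambda>r. of_bool (r \<in> X))"

definition matrix_unit :: "'a \<times> 'a \<Rightarrow> ('a \<times> 'a \<Rightarrow> 'k::field)" where
  "matrix_unit r = (\<lambda>s. if s = r then 1 else 0)"

lemma sum_fun_apply: "(\<Sum>s\<in>S. g s) x = (\<Sum>s\<in>S. g s x)"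
  by (induction S rule: infinite_finite_induct) auto

lemma in_span_matrix_units:
  fixes f :: "'a \<times> 'a \<Rightarrow> 'k::field"
  assumes "finite S" and "\<And>r. f r \<noteq> 0 \<Longrightarrow> r \<in> S"
  shows "f \<in> mat.span (matrix_unit ` S)"
proof -
  have "f = (\<Sum>s\<in>S. mscale (f s) (matrix_unit s))"
  proof
    fix r
    have "(\<Sum>s\<in>S. mscale (f s) (matrix_unit s)) r = (\<Sum>s\<in>S. if r = s then f s else 0)"
      unfolding sum_fun_apply mscale_def matrix_unit_def by (rule sum.cong) auto
    also have "\<dots> = f r" using assms(1) assms(2)[of r] by (auto simp: sum.delta)
    finally show "f r = (\<Sum>s\<in>S. mscale (f s) (matrix_unit s)) r" by simp
  qed
  also have "\<dots> \<in> mat.span (matrix_unit ` S)"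
    by (intro mat.span_sum mat.span_scale mat.span_base) auto
  finally show ?thesis .
qed

lemma inj_matrix_unit: "inj (matrix_unit :: _ \<Rightarrow> ('a \<times> 'a \<Rightarrow> 'k::field))"
  by (auto simp: inj_def matrix_unit_def fun_eq_iff split: if_splits)

lemma independent_matrix_units: "mat.independent (matrix_unit ` S :: ('a \<times> 'a \<Rightarrow> 'k::field) set)"
proof
  assume "mat.dependent (matrix_unit ` S :: ('a \<times> 'a \<Rightarrow> 'k) set)"
  then obtain t u v where t: "finite t" "t \<subseteq> matrix_unit ` S"
      "(\<Sum>w\<in>t. mscale (u w) w) = (0::'a \<times> 'a \<Rightarrow> 'k)" and v: "v \<in> t" "u v \<noteq> 0"
    unfolding mat.dependent_explicit by blast
  obtain r where r: "v = matrix_unit r" using t(2) v(1) by blast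
  have "0 = (\<Sum>w\<in>t. mscale (u w) w) r" using t(3) by simp
  also have "\<dots> = (\<Sum>w\<in>t. if w = v then u w else 0)"
    unfolding sum_fun_apply
  proof (rule sum.cong)
    fix w assume "w \<in> t"
    then obtain r' where w: "w = matrix_unit r'" using t(2) by blast
    then have "w = v \<longleftrightarrow> r' = r" using r inj_matrix_unit[THEN injD] by blast
    then show "mscale (u w) w r = (if w = v then u w else 0)"
      using w by (auto simp: mscale_def matrix_unit_def)
  qed simp
  also have "\<dots> = u v" using v t(1) by (simp add: sum.delta')
  finally show False using v by simp
qed

lemma finite_rel_noncov: "finite P \<Longrightarrow> finite (rel_noncov P lt)"
  by (rule finite_subset[of _ "P \<times> P"]) (auto simp: rel_noncov_def)

lemma lie_bracket_nonzero_imp_noncov: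
  fixes x y :: "'a \<times> 'a \<Rightarrow> 'k::field"
  assumes "x \<in> gprec P lt" and "y \<in> gprec P lt" and "transp lt"
    and "lie_bracket P x y (a, c) \<noteq> 0"
  shows "(a, c) \<in> rel_noncov P lt"
proof -
  have "(\<Sum>b\<in>P. x (a, b) * y (b, c)) \<noteq> 0 \<or> (\<Sum>b\<in>P. y (a, b) * x (b, c)) \<noteq> 0"
    using assms(4) by (auto simp: lie_bracket_def matmul_def)
  then obtain b where "b \<in> P" "x (a, b) * y (b, c) \<noteq> 0 \<or> y (a, b) * x (b, c) \<noteq> 0"
    by (meson sum.not_neutral_contains_not_neutral)
  then have "b \<in> P \<and> a \<in> P \<and> c \<in> P \<and> lt a b \<and> lt b c"
    using assms(1,2) by (auto simp: gprec_def)
  then show ?thesis using \<open>transp lt\<close> unfolding rel_noncov_def transp_def by blast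
qed

lemma lie_bracket_image_subset_span_noncov:
  fixes x :: "'a \<times> 'a \<Rightarrow> 'k::field"
  assumes "finite P" and "transp lt" and "x \<in> gprec P lt"
  shows "lie_bracket P x ` gprec P lt \<subseteq> mat.span (matrix_unit ` rel_noncov P lt)"
  using in_span_matrix_units[OF finite_rel_noncov[OF \<open>finite P\<close>]]
    lie_bracket_nonzero_imp_noncov[OF \<open>x \<in> gprec P lt\<close> _ \<open>transp lt\<close>]
  by (metis (no_types, lifting) image_subsetI surj_pair)

lemma ad_rank_le_card_noncov:
  fixes x :: "'a \<times> 'a \<Rightarrow> 'k::field"
  assumes "finite P" and "transp lt" and "x \<in> gprec P lt"
  shows "ad_rank P lt x \<le> card (rel_noncov P lt)"
proof -
  have "ad_rank P lt x \<le> card (matrix_unit ` rel_noncov P lt :: ('a \<times> 'a \<Rightarrow> 'k) set)"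
    unfolding ad_rank_def using lie_bracket_image_subset_span_noncov[OF assms]
    by (intro mat.dim_le_card) (auto intro: finite_rel_noncov \<open>finite P\<close>)
  also have "\<dots> \<le> card (rel_noncov P lt)"
    by (rule card_image_le) (rule finite_rel_noncov[OF \<open>finite P\<close>])
  finally show ?thesis .
qed

lemma card_noncov_le_ad_rank:
  fixes x :: "'a \<times> 'a \<Rightarrow> 'k::field"
  assumes "finite P" and "transp lt" and "x \<in> gprec P lt"
    and hits: "\<And>r. r \<in> rel_noncov P lt \<Longrightarrow> matrix_unit r \<in> mat.span (lie_bracket P x ` gprec P lt)"
  shows "card (rel_noncov P lt) \<le> ad_rank P lt x"
proof -
  let ?V = "mat.span (lie_bracket P x ` gprec P lt)"
  obtain B where B: "B \<subseteq> ?V" "mat.independent B" "?V \<subseteq> mat.span B" "card B = mat.dim ?V"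
    by (rule mat.basis_exists)
  have "?V \<subseteq> mat.span (matrix_unit ` rel_noncov P lt)"
    using lie_bracket_image_subset_span_noncov[OF assms(1-3)] by (rule mat.span_minimal) simp
  then have "finite B"
    using B(1,2) mat.independent_span_bound finite_rel_noncov[OF \<open>finite P\<close>] by blast
  have "card (rel_noncov P lt) = card (matrix_unit ` rel_noncov P lt :: ('a \<times> 'a \<Rightarrow> 'k) set)"
    by (rule card_image[symmetric]) (rule inj_on_subset[OF inj_matrix_unit], simp)
  also have "\<dots> \<le> card B"
    using mat.independent_span_bound[OF \<open>finite B\<close> independent_matrix_units] hits B(3) by blast
  also have "\<dots> = ad_rank P lt x" by (simp add: B(4) ad_rank_def)
  finally show ?thesis .
qed

lemma breadth_eq_card_noncov_if_hits:
  fixes x :: "'a \<times> 'a \<Rightarrow> 'k::field"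
  assumes "finite P" and "transp lt" and "x \<in> gprec P lt"
    and "\<And>r. r \<in> rel_noncov P lt \<Longrightarrow> matrix_unit r \<in> mat.span (lie_bracket P x ` gprec P lt)"
  shows "breadth P lt TYPE('k) = card (rel_noncov P lt)"
proof -
  let ?A = "ad_rank P lt ` (gprec P lt :: ('a \<times> 'a \<Rightarrow> 'k) set)"
  have le: "\<And>k. k \<in> ?A \<Longrightarrow> k \<le> card (rel_noncov P lt)"
    using ad_rank_le_card_noncov[OF assms(1,2)] by blast
  then have "finite ?A" by (meson finite_atMost finite_subset atMost_iff subsetI)
  moreover have "card (rel_noncov P lt) \<in> ?A"
    using ad_rank_le_card_noncov[OF assms(1-3)] card_noncov_le_ad_rank[OF assms] \<open>x \<in> gprec P lt\<close>
    by (metis image_eqI le_antisym)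
  ultimately show ?thesis unfolding breadth_def using le by (intro Max_eqI)
qed

lemma lie_bracket_indicator_matrix_unit:
  fixes X :: "('a \<times> 'a) set" and x :: "'a \<times> 'a \<Rightarrow> 'k::field"
  defines "x \<equiv> indicator_matrix X"
  assumes "finite P" and "X \<subseteq> P \<times> P"
    and unique_pred: "\<And>a a' b. (a, b) \<in> X \<Longrightarrow> (a', b) \<in> X \<Longrightarrow> a = a'"
    and "(p, b) \<in> X" and "q \<in> P"
  shows "lie_bracket P x (matrix_unit (b, q)) =
    matrix_unit (p, q) - (\<Sum>d\<in>{d. (q, d) \<in> X}. matrix_unit (b, d))"
proof
  fix r :: "'a \<times> 'a"
  obtain a c where r: "r = (a, c)" by fastforce
  have "b \<in> P" using \<open>X \<subseteq> P \<times> P\<close> \<open>(p, b) \<in> X\<close> by auto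
  have "{d. (q, d) \<in> X} \<subseteq> P" using \<open>X \<subseteq> P \<times> P\<close> by auto
  then have "finite {d. (q, d) \<in> X}" using \<open>finite P\<close> by (rule finite_subset)
  have "matmul P x (matrix_unit (b, q)) (a, c) =
      (\<Sum>b'\<in>P. if b' = b then (if c = q \<and> (a, b) \<in> X then 1 else 0) else 0)"
    unfolding matmul_def prod.case by (rule sum.cong) (auto simp: x_def indicator_matrix_def matrix_unit_def)
  also have "\<dots> = matrix_unit (p, q) (a, c)"
  proof -
    have "(a, b) \<in> X \<longleftrightarrow> a = p" using unique_pred \<open>(p, b) \<in> X\<close> by blast
    then show ?thesis using \<open>b \<in> P\<close> \<open>finite P\<close> by (simp add: sum.delta' matrix_unit_def)
  qed
  finally have left: "matmul P x (matrix_unit (b, q)) (a, c) = matrix_unit (p, q) (a, c)" .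
  have "matmul P (matrix_unit (b, q)) x (a, c) =
      (\<Sum>b'\<in>P. if b' = q then (if a = b \<and> (q, c) \<in> X then 1 else 0) else 0)"
    unfolding matmul_def prod.case by (rule sum.cong) (auto simp: x_def indicator_matrix_def matrix_unit_def)
  also have "\<dots> = (\<Sum>d\<in>{d. (q, d) \<in> X}. if d = c then (if a = b then 1 else 0) else 0)"
    using \<open>finite P\<close> \<open>q \<in> P\<close> \<open>finite {d. (q, d) \<in> X}\<close> by (simp add: sum.delta')
  also have "\<dots> = (\<Sum>d\<in>{d. (q, d) \<in> X}. matrix_unit (b, d)) (a, c)"
    unfolding sum_fun_apply by (rule sum.cong) (auto simp: matrix_unit_def)
  finally have right: "matmul P (matrix_unit (b, q)) x (a, c) =
      (\<Sum>d\<in>{d. (q, d) \<in> X}. matrix_unit (b, d)) (a, c)" .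
  show "lie_bracket P x (matrix_unit (b, q)) r =
      (matrix_unit (p, q) - (\<Sum>d\<in>{d. (q, d) \<in> X}. matrix_unit (b, d))) r"
    unfolding r lie_bracket_def fun_diff_def by (simp only: left right)
qed

lemma card_upset_strict_mono:
  assumes "finite P" and "transp lt" and "irreflp lt" and "d \<in> P" and "lt q d"
  shows "card {e \<in> P. lt d e} < card {e \<in> P. lt q e}"
proof (rule psubset_card_mono)
  show "{e \<in> P. lt d e} \<subset> {e \<in> P. lt q e}"
  proof
    show "{e \<in> P. lt d e} \<subseteq> {e \<in> P. lt q e}"
      using \<open>transp lt\<close> \<open>lt q d\<close> by (blast dest: transpD)
    show "{e \<in> P. lt d e} \<noteq> {e \<in> P. lt q e}"
      using \<open>irreflp lt\<close> \<open>d \<in> P\<close> \<open>lt q d\<close> by (auto dest: irreflpD)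
  qed
qed (use \<open>finite P\<close> in simp)

lemma matrix_unit_noncov_in_span_ad_indicator:
  fixes X :: "('a \<times> 'a) set"
  assumes "finite P" and "transp lt" and "irreflp lt" and "X \<subseteq> P \<times> P"
    and X_lt: "\<And>a b. (a, b) \<in> X \<Longrightarrow> lt a b"
    and unique_pred: "\<And>a a' b. (a, b) \<in> X \<Longrightarrow> (a', b) \<in> X \<Longrightarrow> a = a'"
    and factor: "\<And>p q. (p, q) \<in> rel_noncov P lt \<Longrightarrow> \<exists>b. (p, b) \<in> X \<and> lt b q"
    and "(p, q) \<in> rel_noncov P lt"
  shows "matrix_unit (p, q)
    \<in> mat.span (lie_bracket P (indicator_matrix X) ` gprec P lt :: ('a \<times> 'a \<Rightarrow> 'k::field) set)"
  using \<open>(p, q) \<in> rel_noncov P lt\<close>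
proof (induction "card {e \<in> P. lt q e}" arbitrary: p q rule: less_induct)
  case less
  let ?V = "mat.span (lie_bracket P (indicator_matrix X) ` gprec P lt :: ('a \<times> 'a \<Rightarrow> 'k) set)"
  have "q \<in> P" using less.prems by (simp add: rel_noncov_def)
  obtain b where b: "(p, b) \<in> X" "lt b q" using factor[OF less.prems] by blast
  have "b \<in> P" using b(1) \<open>X \<subseteq> P \<times> P\<close> by auto
  have "(\<Sum>d\<in>{d. (q, d) \<in> X}. matrix_unit (b, d)) \<in> ?V"
  proof (rule mat.span_sum)
    fix d assume "d \<in> {d. (q, d) \<in> X}"
    then have "d \<in> P" "lt q d" using \<open>X \<subseteq> P \<times> P\<close> X_lt by auto
    then have "(b, d) \<in> rel_noncov P lt"
      using \<open>b \<in> P\<close> \<open>q \<in> P\<close> b(2) \<open>transp lt\<close> unfolding rel_noncov_def transp_def by blast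
    then show "matrix_unit (b, d) \<in> ?V"
      using less.hyps card_upset_strict_mono[OF assms(1-3) \<open>d \<in> P\<close> \<open>lt q d\<close>] by blast
  qed
  moreover have "matrix_unit (b, q) \<in> gprec P lt"
    using \<open>b \<in> P\<close> \<open>q \<in> P\<close> b(2) by (auto simp: gprec_def matrix_unit_def split: if_splits)
  then have "lie_bracket P (indicator_matrix X) (matrix_unit (b, q)) \<in> ?V"
    by (intro mat.span_base imageI)
  ultimately have "lie_bracket P (indicator_matrix X) (matrix_unit (b, q))
      + (\<Sum>d\<in>{d. (q, d) \<in> X}. matrix_unit (b, d)) \<in> ?V"
    by (rule mat.span_add[rotated])
  then show ?case
    by (simp add: lie_bracket_indicator_matrix_unit[OF assms(1,4) unique_pred b(1) \<open>q \<in> P\<close>])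
qed

lemma breadth_eq_card_noncov_if_factoring_edges:
  fixes X :: "('a \<times> 'a) set"
  assumes "finite P" and "transp lt" and "irreflp lt" and "X \<subseteq> P \<times> P"
    and "\<And>a b. (a, b) \<in> X \<Longrightarrow> lt a b"
    and "\<And>a a' b. (a, b) \<in> X \<Longrightarrow> (a', b) \<in> X \<Longrightarrow> a = a'"
    and "\<And>p q. (p, q) \<in> rel_noncov P lt \<Longrightarrow> \<exists>b. (p, b) \<in> X \<and> lt b q"
  shows "breadth P lt TYPE('k::field) = card (rel_noncov P lt)"
proof (rule breadth_eq_card_noncov_if_hits)
  show "indicator_matrix X \<in> (gprec P lt :: ('a \<times> 'a \<Rightarrow> 'k) set)"
    using assms(4,5) by (auto simp: gprec_def indicator_matrix_def)
  show "matrix_unit r \<in> mat.span (lie_bracket P (indicator_matrix X) ` gprec P lt)"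
    if "r \<in> rel_noncov P lt" for r :: "'a \<times> 'a"
    using matrix_unit_noncov_in_span_ad_indicator[of P lt X, OF assms] that by (cases r) simp
qed (use assms in auto)

definition two_by_n_edges :: "nat \<Rightarrow> ((nat \<times> nat) \<times> (nat \<times> nat)) set" where
  "two_by_n_edges n = {((i, j), (i', j')). (j' = j \<and> i' = i + 1 \<and> 1 \<le> i \<and> i < n \<and> (j = 1 \<or> j = 2))
      \<or> (i = 1 \<and> i' = 1 \<and> j = 1 \<and> j' = 2)}"

lemma breadth_two_by_n:
  assumes "n \<ge> 1"
  shows "breadth (two_by_n n) two_by_n_lt TYPE('k::field) = card (rel_noncov (two_by_n n) two_by_n_lt)"
proof (rule breadth_eq_card_noncov_if_factoring_edges[where X = "two_by_n_edges n"])
  show "finite (two_by_n n)"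
    by (rule finite_subset[of _ "{1..n} \<times> {1..2}"]) (auto simp: two_by_n_def)
  show "two_by_n_edges n \<subseteq> two_by_n n \<times> two_by_n n"
    using assms by (auto simp: two_by_n_edges_def two_by_n_def)
  show "\<exists>b. (p, b) \<in> two_by_n_edges n \<and> two_by_n_lt b q"
    if noncov: "(p, q) \<in> rel_noncov (two_by_n n) two_by_n_lt" for p q
  proof -
    obtain i j i' j' where p: "p = (i, j)" and q: "q = (i', j')" by fastforce
    from noncov obtain i'' j'' where "i \<ge> 1" "j \<ge> 1" "i' \<le> n" "j' \<le> 2"
      "i \<le> i''" "j \<le> j''" "(i, j) \<noteq> (i'', j'')" "i'' \<le> i'" "j'' \<le> j'" "(i'', j'') \<noteq> (i', j')"
      unfolding rel_noncov_def two_by_n_def two_by_n_lt_def p q by auto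
    then have "(p, (i + 1, j)) \<in> two_by_n_edges n \<and> two_by_n_lt (i + 1, j) q"
      unfolding p q two_by_n_edges_def two_by_n_lt_def by auto
    then show ?thesis ..
  qed
qed (auto simp: transp_def irreflp_def two_by_n_lt_def two_by_n_edges_def)

lemma tree_lt_level_less: "tree_lt m n x y \<Longrightarrow> snd x < snd y"
  unfolding tree_lt_def by (induction rule: trancl_induct) (auto simp: tree_cover_def)

lemma block_index_unique:
  fixes i i' j m :: nat
  assumes "m * (i - 1) < j" "j \<le> m * i" "m * (i' - 1) < j" "j \<le> m * i'"
  shows "i = i'"
proof (rule ccontr)
  assume "i \<noteq> i'"
  then have "m * i \<le> m * (i' - 1) \<or> m * i' \<le> m * (i - 1)" by (cases "i < i'") auto
  then show False using assms by linarith
qed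

lemma breadth_tree_poset:
  assumes "m \<ge> 2" and "n \<ge> 1"
  shows "breadth (tree_poset m n) (tree_lt m n) TYPE('k::field)
    = card (rel_noncov (tree_poset m n) (tree_lt m n))"
proof (rule breadth_eq_card_noncov_if_factoring_edges[where X = "tree_cover m n"])
  have "tree_poset m n \<subseteq> {..m ^ n} \<times> {..n}"
    using \<open>m \<ge> 2\<close> by (auto simp: tree_poset_def intro: order.trans[OF _ power_increasing])
  then show "finite (tree_poset m n)" by (rule finite_subset) simp
  show "transp (tree_lt m n)"
    by (auto simp: transp_def tree_lt_def)
  show "irreflp (tree_lt m n)"
    by (rule irreflpI) (use tree_lt_level_less in blast)
  have "m * i \<le> m ^ k" if "1 \<le> k" "i \<le> m ^ (k - 1)" for i k
    using that by (cases k) auto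
  then show "tree_cover m n \<subseteq> tree_poset m n \<times> tree_poset m n"
    by (fastforce simp: tree_cover_def tree_poset_def)
  show "a = a'" if edges: "(a, b) \<in> tree_cover m n" "(a', b) \<in> tree_cover m n" for a a' b
  proof -
    obtain i i' j k where "a = (i, k)" "a' = (i', k)"
      "m * (i - 1) + 1 \<le> j" "j \<le> m * i" "m * (i' - 1) + 1 \<le> j" "j \<le> m * i'"
      using edges by (auto simp: tree_cover_def)
    then show ?thesis using block_index_unique[of m i j i'] by simp
  qed
  show "\<exists>b. (p, b) \<in> tree_cover m n \<and> tree_lt m n b q"
    if noncov: "(p, q) \<in> rel_noncov (tree_poset m n) (tree_lt m n)" for p q
  proof -
    obtain z where "tree_lt m n p z" "tree_lt m n z q" "tree_lt m n p q"
      using noncov unfolding rel_noncov_def by auto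
    then have "snd p + 1 < snd q" using tree_lt_level_less[of m n p z] tree_lt_level_less[of m n z q] by simp
    obtain b where b: "(p, b) \<in> tree_cover m n" "(b, q) \<in> (tree_cover m n)\<^sup>*"
      using \<open>tree_lt m n p q\<close> unfolding tree_lt_def by (meson tranclD)
    have "b \<noteq> q" using b(1) \<open>snd p + 1 < snd q\<close> by (auto simp: tree_cover_def)
    then show ?thesis using b unfolding tree_lt_def by (meson rtranclD)
  qed
qed (auto simp: tree_lt_def)

theorem lemma1:
  shows "(\<forall>n::nat. n \<ge> 1 \<longrightarrow>
            breadth (two_by_n n) two_by_n_lt TYPE('k::{alg_closed_field, field_char_0})
              = card (rel_noncov (two_by_n n) two_by_n_lt))
       \<and> (\<forall>m n::nat. m \<ge> 2 \<longrightarrow> n \<ge> 1 \<longrightarrow>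
            breadth (tree_poset m n) (tree_lt m n) TYPE('k)
              = card (rel_noncov (tree_poset m n) (tree_lt m n)))"
  using breadth_two_by_n breadth_tree_poset by blast

end
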